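(* If $X$ and $Y$ are balanced words with $X\sim Y$, then $E(X)=E(Y)$.
   Context: $\mathcal{A}$ is the free associative $\mathbb{C}$-algebra on noncommuting generators $L,R$; words are finite products of these letters. A word is balanced if it contains equally many $L$'s and $R$'s. $\mathcal{J}$ is the two-sided ideal generated by $\{FG-GF : F,G \text{ nonempty balanced words}\}$ and $X\sim Y$ means $X-Y\in\mathcal{J}$. For a balanced word $W=a_1\cdots a_n$ and $0\le k\le n$, $e_k(W)=\sum_{i=1}^k\overline{a_i}$ with $\overline{R}=1$, $\overline{L}=-1$; the elevation multiset $E(W)$ is the multiset $\{e_0(W),e_1(W),\dots,e_n(W)\}$. *)

theory Defs
  imports Complex_Main "HOL-Library.Multiset"
begin

datatype letter = L | R
type_synonym word = "letter list"

text \<open>Elements of the free associative algebra A = C<L,R>: finitely supported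
  coefficient functions on words.\<close>
type_synonym alg = "word \<Rightarrow> complex"

definition fin_supp :: "alg \<Rightarrow> bool" where
  "fin_supp p \<longleftrightarrow> finite {w. p w \<noteq> 0}"

definition mono :: "word \<Rightarrow> alg" where
  "mono w = (\<lambda>u. if u = w then 1 else 0)"

definition aadd :: "alg \<Rightarrow> alg \<Rightarrow> alg" where
  "aadd p q = (\<lambda>w. p w + q w)"

definition asub :: "alg \<Rightarrow> alg \<Rightarrow> alg" where
  "asub p q = (\<lambda>w. p w - q w)"

text \<open>Product in A (concatenation extended bilinearly).\<close>
definition amult :: "alg \<Rightarrow> alg \<Rightarrow> alg" where
  "amult p q = (\<lambda>w. \<Sum>i\<le>length w. p (take i w) * q (drop i w))"

definition balanced :: "word \<Rightarrow> bool" where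
  "balanced w \<longleftrightarrow> count_list w L = count_list w R"

inductive_set J :: "alg set" where
  gen: "\<lbrakk>F \<noteq> []; G \<noteq> []; balanced F; balanced G\<rbrakk>
        \<Longrightarrow> asub (mono (F @ G)) (mono (G @ F)) \<in> J"
| zero: "(\<lambda>_. 0) \<in> J"
| add: "\<lbrakk>p \<in> J; q \<in> J\<rbrakk> \<Longrightarrow> aadd p q \<in> J"
| lmult: "\<lbrakk>p \<in> J; fin_supp a\<rbrakk> \<Longrightarrow> amult a p \<in> J"
| rmult: "\<lbrakk>p \<in> J; fin_supp a\<rbrakk> \<Longrightarrow> amult p a \<in> J"

definition sim :: "alg \<Rightarrow> alg \<Rightarrow> bool" where
  "sim X Y \<longleftrightarrow> asub X Y \<in> J"

definition lval :: "letter \<Rightarrow> int" where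
  "lval a = (if a = R then 1 else -1)"

definition elev :: "nat \<Rightarrow> word \<Rightarrow> int" where
  "elev k W = (\<Sum>i<k. lval (W ! i))"

definition elevations :: "word \<Rightarrow> int multiset" where
  "elevations W = mset (map (\<lambda>k. elev k W) [0..<Suc (length W)])"

end

theory Submission
  imports Defs
begin

text \<open>The pair (elevation multiset, height) of a word is compositional: the invariant of
  u @ v is computed from those of u and v, and for balanced F, G it does not depend on the
  order of F and G. For any compositional invariant, summing the coefficients of an element
  of A over the words of a fixed length with invariant in a fixed set is a linear functional,
  and by compositionality the family of these functionals annihilates products as soon as it
  annihilates one factor. Hence all of them vanish on J; applied to mono X - mono Y they
  separate X from Y unless X and Y have the same invariant.\<close>

instance letter :: finite
  by standard (rule finite_subset[of _ "{L, R}"], use letter.exhaust in auto)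

definition height :: "word \<Rightarrow> int" where
  "height w = sum_list (map lval w)"

lemma height_append: "height (u @ v) = height u + height v"
  by (simp add: height_def)

lemma height_eq_count_list: "height w = int (count_list w R) - int (count_list w L)"
proof (induction w)
  case (Cons a w)
  then show ?case
    by (cases a) (auto simp: height_def lval_def)
qed (simp add: height_def)

lemma height_balanced: "balanced w \<Longrightarrow> height w = 0"
  by (simp add: balanced_def height_eq_count_list)

lemma elevations_Nil: "elevations [] = {#0#}"
  by (simp add: elevations_def elev_def)

lemma elevations_Cons:
  "elevations (a # w) = add_mset 0 (image_mset ((+) (lval a)) (elevations w))"
proof -
  have elev_Cons: "elev (Suc k) (a # w) = lval a + elev k w" for k
    unfolding elev_def by (subst sum.lessThan_Suc_shift) simp
  have "[0..<Suc (Suc (length w))] = 0 # map Suc [0..<Suc (length w)]"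
    by (simp add: upt_conv_Cons map_Suc_upt del: upt_Suc)
  then have "elevations (a # w)
      = add_mset (elev 0 (a # w)) (mset (map (\<lambda>k. elev (Suc k) (a # w)) [0..<Suc (length w)]))"
    unfolding elevations_def length_Cons by (simp only: list.map mset.simps map_map comp_def)
  also have "\<dots> = add_mset 0 (image_mset ((+) (lval a)) (elevations w))"
    unfolding elevations_def
    by (simp add: elev_Cons mset_map image_mset.compositionality comp_def del: upt_Suc)
      (simp add: elev_def)
  finally show ?thesis .
qed

lemma zero_in_elevations: "0 \<in># elevations w"
  by (cases w) (simp_all add: elevations_Nil elevations_Cons)

text \<open>The initial elevation 0 of v is removed because, once shifted by height u, it is the
  final elevation of u.\<close>

lemma elevations_append:
  "elevations (u @ v) = elevations u + image_mset ((+) (height u)) (elevations v - {#0#})"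
proof (induction u)
  case Nil
  then show ?case
    using zero_in_elevations[of v] by (simp add: elevations_Nil height_def)
next
  case (Cons a u)
  then show ?case
    by (simp add: elevations_Cons height_def image_mset.compositionality comp_def add.assoc)
qed

lemma elevations_append_commute:
  assumes "balanced F" and "balanced G"
  shows "elevations (F @ G) = elevations (G @ F)"
proof -
  obtain A where A: "elevations F = add_mset 0 A"
    using multi_member_split[OF zero_in_elevations] by blast
  obtain B where B: "elevations G = add_mset 0 B"
    using multi_member_split[OF zero_in_elevations] by blast
  have "(+) (0::int) = id"
    by auto
  then show ?thesis
    using assms by (simp add: elevations_append height_balanced A B add.commute)
qed

lemma sum_length_append_split:
  assumes "i \<le> n"
  shows "(\<Sum>w | length w = n. f (take i w) (drop i w))
       = (\<Sum>u | length u = i. \<Sum>v | length v = n - i. f u v)"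
proof -
  have split: "bij_betw (\<lambda>w. (take i w, drop i w))
          {w. length w = n} ({u. length u = i} \<times> {v. length v = n - i})"
    by (rule bij_betw_byWitness[where f' = "\<lambda>(u, v). u @ v"]) (use assms in auto)
  have "(\<Sum>w | length w = n. f (take i w) (drop i w))
      = (\<Sum>(u, v) \<in> {u. length u = i} \<times> {v. length v = n - i}. f u v)"
    using sum.reindex_bij_betw[OF split, of "\<lambda>(u, v). f u v"] by simp
  then show ?thesis
    by (simp add: sum.cartesian_product)
qed

locale compositional_invariant =
  fixes invar :: "word \<Rightarrow> 'b" and comb :: "'b \<Rightarrow> 'b \<Rightarrow> 'b"
  assumes invar_append: "invar (u @ v) = comb (invar u) (invar v)"
begin

definition class_sum :: "nat \<Rightarrow> ('b \<Rightarrow> bool) \<Rightarrow> alg \<Rightarrow> complex" where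
  "class_sum n P p = (\<Sum>w | length w = n. if P (invar w) then p w else 0)"

lemma class_sum_mono:
  "class_sum n P (mono x) = (if length x = n \<and> P (invar x) then 1 else 0)"
proof -
  have "class_sum n P (mono x)
      = (\<Sum>w | length w = n. if w = x then (if P (invar x) then 1 else 0) else 0)"
    unfolding class_sum_def mono_def by (rule sum.cong) auto
  then show ?thesis
    by (simp add: sum.delta finite_list_length)
qed

lemma class_sum_asub: "class_sum n P (asub p q) = class_sum n P p - class_sum n P q"
  unfolding class_sum_def asub_def sum_subtractf[symmetric] by (rule sum.cong) auto

lemma class_sum_aadd: "class_sum n P (aadd p q) = class_sum n P p + class_sum n P q"
  unfolding class_sum_def aadd_def sum.distrib[symmetric] by (rule sum.cong) auto

lemma class_sum_amult:
  "class_sum n P (amult p q)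
     = (\<Sum>i\<le>n. \<Sum>u | length u = i. \<Sum>v | length v = n - i.
          if P (comb (invar u) (invar v)) then p u * q v else 0)"
proof -
  have "class_sum n P (amult p q)
      = (\<Sum>w | length w = n. \<Sum>i\<le>n.
           if P (comb (invar (take i w)) (invar (drop i w)))
           then p (take i w) * q (drop i w) else 0)"
    unfolding class_sum_def amult_def
    by (rule sum.cong) (auto simp: sum.If_cases simp flip: invar_append)
  also have "\<dots> = (\<Sum>i\<le>n. \<Sum>w | length w = n.
           if P (comb (invar (take i w)) (invar (drop i w)))
           then p (take i w) * q (drop i w) else 0)"
    by (rule sum.swap)
  also have "\<dots> = (\<Sum>i\<le>n. \<Sum>u | length u = i. \<Sum>v | length v = n - i.
           if P (comb (invar u) (invar v)) then p u * q v else 0)"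
    by (rule sum.cong[OF refl], rule sum_length_append_split) simp
  finally show ?thesis .
qed

lemma class_sum_amult_left_eq_0:
  assumes "\<And>m Q. class_sum m Q p = 0"
  shows "class_sum n P (amult a p) = 0"
proof -
  have "class_sum n P (amult a p)
      = (\<Sum>i\<le>n. \<Sum>u | length u = i.
           a u * class_sum (n - i) (\<lambda>k. P (comb (invar u) k)) p)"
    unfolding class_sum_amult by (auto simp: class_sum_def sum_distrib_left intro!: sum.cong)
  then show ?thesis
    by (simp add: assms)
qed

lemma class_sum_amult_right_eq_0:
  assumes "\<And>m Q. class_sum m Q p = 0"
  shows "class_sum n P (amult p a) = 0"
proof -
  have "class_sum n P (amult p a)
      = (\<Sum>i\<le>n. \<Sum>v | length v = n - i. \<Sum>u | length u = i.
           if P (comb (invar u) (invar v)) then p u * a v else 0)"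
    unfolding class_sum_amult by (intro sum.cong refl sum.swap)
  also have "\<dots> = (\<Sum>i\<le>n. \<Sum>v | length v = n - i.
           a v * class_sum i (\<lambda>k. P (comb k (invar v))) p)"
    unfolding class_sum_def
    by (auto simp: sum_distrib_left mult.commute intro!: sum.cong)
  finally show ?thesis
    by (simp add: assms)
qed

lemma class_sum_J_eq_0:
  assumes commute: "\<And>F G. balanced F \<Longrightarrow> balanced G \<Longrightarrow> invar (F @ G) = invar (G @ F)"
  shows "p \<in> J \<Longrightarrow> class_sum n P p = 0"
proof (induction p arbitrary: n P rule: J.induct)
  case (gen F G)
  then show ?case
    by (simp add: class_sum_asub class_sum_mono commute)
next
  case zero
  then show ?case
    by (simp add: class_sum_def)
next
  case (add p q)
  then show ?case
    by (simp add: class_sum_aadd)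
qed (simp_all add: class_sum_amult_left_eq_0 class_sum_amult_right_eq_0)

lemma invar_eq_if_sim_mono:
  assumes "\<And>F G. balanced F \<Longrightarrow> balanced G \<Longrightarrow> invar (F @ G) = invar (G @ F)"
    and "sim (mono X) (mono Y)"
  shows "invar X = invar Y"
proof -
  let ?P = "\<lambda>k. k = invar X"
  have "class_sum (length X) ?P (asub (mono X) (mono Y)) = 0"
    using assms by (simp add: sim_def class_sum_J_eq_0)
  then show ?thesis
    by (simp add: class_sum_asub class_sum_mono split: if_splits)
qed

end

interpretation elevations_height: compositional_invariant
  "\<lambda>w. (elevations w, height w)"
  "\<lambda>(E, h) (E', h'). (E + image_mset ((+) h) (E' - {#0#}), h + h')"
  by unfold_locales (simp add: elevations_append height_append)

theorem lemma4p4: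
  fixes X Y :: word
  assumes "balanced X" and "balanced Y" and "sim (mono X) (mono Y)"
  shows "elevations X = elevations Y"
proof -
  have "(elevations X, height X) = (elevations Y, height Y)"
  proof (rule elevations_height.invar_eq_if_sim_mono)
    show "(elevations (F @ G), height (F @ G)) = (elevations (G @ F), height (G @ F))"
      if "balanced F" and "balanced G" for F G
      using that by (simp add: elevations_append_commute height_append)
    show "sim (mono X) (mono Y)"
      by (fact assms(3))
  qed
  then show ?thesis
    by simp
qed

end
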